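(* Let $(N,X)$ be a dynamical network $N=F\circ T$ as described in the context, with local Lipschitz constants $L_1,\dots,L_n$ and interaction constants $\Lambda_{ij}$, and let $M_N=\Lambda^T\cdot\mathrm{diag}[L_1,\dots,L_n]$, i.e. $(M_N)_{ji}=\Lambda_{ij}L_i$. If $\rho(M_N)<1$, then $(N,X)$ has a globally attracting fixed point, i.e. there is $\tilde x\in X$ with $N^k(y)\to\tilde x$ as $k\to\infty$ for every $y\in X$.
   Context: Let $\mathcal{I}=\{1,\dots,n\}$. For each $i\in\mathcal{I}$ let $(X_i,d)$ be a compact metric space and $T_i:X_i\to X_i$ a map with $L_i=\sup_{x_i\ne y_i}\frac{d(T_i(x_i),T_i(y_i))}{d(x_i,y_i)}<\infty$. Let $X=\prod_{i}X_i$ with the metric $d_{\max}(x,y)=\max_i d(x_i,y_i)$, and $T:X\to X$ the product map $T(x)_i=T_i(x_i)$. A map $F:X\to X$ is an interaction if for every $j\in\mathcal{I}$ there are a nonempty $\mathcal{I}_j\subseteq\mathcal{I}$ and a continuous $F_j:\prod_{i\in\mathcal{I}_j}X_i\to X_j$ with $F(x)_j=F_j(\{x_i\}_{i\in\mathcal{I}_j})$ and constants $\Lambda_{ij}\ge0$ such that $d(F_j(\{x_i\}),F_j(\{y_i\}))\le\sum_{i\in\mathcal{I}_j}\Lambda_{ij}d(x_i,y_i)$ for all arguments; $\Lambda_{ij}=0$ if $i\notin\mathcal{I}_j$, and $\Lambda=(\Lambda_{ij})\in\mathbb{R}^{n\times n}$. The dynamical network is $N=F\circ T:X\to X$. $\rho(A)$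 denotes the spectral radius of a matrix $A$. *)

theory Defs
  imports "HOL-Analysis.Analysis" "Jordan_Normal_Form.Spectral_Radius"
begin

text \<open>Components are indexed by i < n (the paper's 1..n shifted to 0..n-1).
  All component spaces X i are subsets of one ambient metric space 'a, with the
  induced metric.\<close>

text \<open>Lipschitz constant of T on S: the supremum of the difference quotients
  (with the convention 0 when S has fewer than two points).\<close>
definition lip_const :: "'a::metric_space set \<Rightarrow> ('a \<Rightarrow> 'a) \<Rightarrow> real" where
  "lip_const S T = Sup (insert 0 {dist (T x) (T y) / dist x y | x y. x \<in> S \<and> y \<in> S \<and> x \<noteq> y})"

definition dmax :: "nat \<Rightarrow> (nat \<Rightarrow> 'a::metric_space) \<Rightarrow> (nat \<Rightarrow> 'a) \<Rightarrow> real" where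
  "dmax n x y = Max (insert 0 ((\<lambda>i. dist (x i) (y i)) ` {..<n}))"

definition prod_map :: "nat \<Rightarrow> (nat \<Rightarrow> 'a \<Rightarrow> 'a) \<Rightarrow> (nat \<Rightarrow> 'a) \<Rightarrow> (nat \<Rightarrow> 'a)" where
  "prod_map n T x = restrict (\<lambda>i. T i (x i)) {..<n}"

definition network :: "nat \<Rightarrow> (nat \<Rightarrow> (nat \<Rightarrow> 'a) \<Rightarrow> 'a) \<Rightarrow> (nat \<Rightarrow> 'a \<Rightarrow> 'a)
    \<Rightarrow> (nat \<Rightarrow> 'a) \<Rightarrow> (nat \<Rightarrow> 'a)" where
  "network n F T x = restrict (\<lambda>j. F j (prod_map n T x)) {..<n}"

definition interaction :: "nat \<Rightarrow> (nat \<Rightarrow> 'a::metric_space set) \<Rightarrow> (nat \<Rightarrow> (nat \<Rightarrow> 'a) \<Rightarrow> 'a)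
    \<Rightarrow> (nat \<Rightarrow> nat set) \<Rightarrow> (nat \<Rightarrow> nat \<Rightarrow> real) \<Rightarrow> bool" where
  "interaction n X F I Lam \<longleftrightarrow>
     (\<forall>j<n. I j \<noteq> {} \<and> I j \<subseteq> {..<n}
        \<and> (\<forall>x\<in>PiE {..<n} X. F j x \<in> X j)
        \<and> (\<forall>x\<in>PiE {..<n} X. \<forall>y\<in>PiE {..<n} X. (\<forall>i\<in>I j. x i = y i) \<longrightarrow> F j x = F j y)
        \<and> continuous_on (PiE {..<n} X) (F j)
        \<and> (\<forall>x\<in>PiE {..<n} X. \<forall>y\<in>PiE {..<n} X.
              dist (F j x) (F j y) \<le> (\<Sum>i\<in>I j. Lam i j * dist (x i) (y i)))
        \<and> (\<forall>i<n. Lam i j \<ge> 0 \<and> (i \<notin> I j \<longrightarrow> Lam i j = 0)))"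

definition network_matrix :: "nat \<Rightarrow> (nat \<Rightarrow> nat \<Rightarrow> real) \<Rightarrow> (nat \<Rightarrow> real) \<Rightarrow> complex mat" where
  "network_matrix n Lam L = mat n n (\<lambda>(j, i). complex_of_real (Lam i j * L i))"

end

theory Submission
  imports Defs
begin

text \<open>The one-step estimate
  d(N x_j, N y_j) \<le> \<Sum>_i \<Lambda>_ij L_i d(x_i, y_i) iterates to a bound by the k-th power of the
  nonnegative matrix M_N. For \<rho>(M_N) < r < 1 the Jordan normal form makes the entries of M_N^k
  O(r^k), and the components are bounded, so any two orbits approach each other geometrically.
  Hence every orbit is Cauchy, and all orbits converge to the limit of a single one.\<close>

lemma lip_const_nonneg:
  assumes "bdd_above {dist (T x) (T y) / dist x y | x y. x \<in> S \<and> y \<in> S \<and> x \<noteq> y}"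
  shows "0 \<le> lip_const S T"
  unfolding lip_const_def using assms by (intro cSup_upper) auto

lemma dist_le_lip_const:
  assumes "bdd_above {dist (T x) (T y) / dist x y | x y. x \<in> S \<and> y \<in> S \<and> x \<noteq> y}"
    and "x \<in> S" "y \<in> S"
  shows "dist (T x) (T y) \<le> lip_const S T * dist x y"
proof (cases "x = y")
  case True
  then show ?thesis using lip_const_nonneg[OF assms(1)] by simp
next
  case False
  have "dist (T x) (T y) / dist x y \<le> lip_const S T"
    unfolding lip_const_def using assms False by (intro cSup_upper) auto
  then show ?thesis using False by (simp add: divide_le_eq)
qed

lemma pow_mat_smult:
  fixes c :: "'a :: comm_semiring_1"
  assumes "B \<in> carrier_mat n n"
  shows "(c \<cdot>\<^sub>m B) ^\<^sub>m k = c ^ k \<cdot>\<^sub>m (B ^\<^sub>m k)"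
proof (induction k)
  case 0
  then show ?case using assms by (auto intro!: eq_matI)
next
  case (Suc k)
  have "(c \<cdot>\<^sub>m B) ^\<^sub>m Suc k = (c ^ k \<cdot>\<^sub>m (B ^\<^sub>m k)) * (c \<cdot>\<^sub>m B)"
    using Suc by simp
  also have "\<dots> = c ^ Suc k \<cdot>\<^sub>m (B ^\<^sub>m Suc k)"
    using assms by (auto intro!: eq_matI sum.cong simp: scalar_prod_def sum_distrib_left ac_simps)
  finally show ?case .
qed

lemma eigenvector_smult_mat:
  assumes A: "A \<in> carrier_mat n n" and ev: "eigenvector A v \<mu>"
  shows "eigenvector (c \<cdot>\<^sub>m A) v (c * \<mu>)"
proof -
  have v: "v \<in> carrier_vec n" using A ev unfolding eigenvector_def by auto
  have "(c \<cdot>\<^sub>m A) *\<^sub>v v = c \<cdot>\<^sub>v (A *\<^sub>v v)"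
    using A v by (auto intro!: eq_vecI sum.cong simp: scalar_prod_def sum_distrib_left ac_simps)
  then show ?thesis using ev unfolding eigenvector_def by (auto simp: smult_smult_assoc)
qed

lemma spectral_radius_smult_mat_le:
  assumes A: "A \<in> carrier_mat n n" and n: "n > 0" and c: "c \<noteq> 0"
  shows "spectral_radius (c \<cdot>\<^sub>m A) \<le> norm c * spectral_radius A"
proof -
  have cA: "c \<cdot>\<^sub>m A \<in> carrier_mat n n" using A by simp
  obtain \<mu> where "\<mu> \<in> spectrum (c \<cdot>\<^sub>m A)" and \<rho>: "spectral_radius (c \<cdot>\<^sub>m A) = norm \<mu>"
    using spectral_radius_mem_max(1)[OF cA n] by auto
  then obtain v where "eigenvector (c \<cdot>\<^sub>m A) v \<mu>"
    unfolding spectrum_def eigenvalue_def by auto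
  then have "eigenvector (inverse c \<cdot>\<^sub>m (c \<cdot>\<^sub>m A)) v (inverse c * \<mu>)"
    by (rule eigenvector_smult_mat[OF cA])
  moreover have "inverse c \<cdot>\<^sub>m (c \<cdot>\<^sub>m A) = A"
    using A c by (auto intro!: eq_matI)
  ultimately have "inverse c * \<mu> \<in> spectrum A"
    unfolding spectrum_def eigenvalue_def by auto
  then have "norm (inverse c * \<mu>) \<le> spectral_radius A"
    using spectral_radius_mem_max(2)[OF A n] by auto
  moreover have "norm (inverse c * \<mu>) = norm \<mu> / norm c"
    by (simp add: norm_mult norm_inverse divide_inverse_commute)
  ultimately show ?thesis
    using c by (simp add: \<rho> pos_divide_le_eq mult.commute)
qed

text \<open>Rescaling by r reduces this to the bounded-powers criterion for spectral radius below 1,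
  which the library derives from the Jordan normal form.\<close>
lemma norm_bound_pow_mat_geometric:
  assumes A: "A \<in> carrier_mat n n" and r: "spectral_radius A < r" "0 < r"
  shows "\<exists>c. \<forall>k. norm_bound (A ^\<^sub>m k) (c * r ^ k)"
proof (cases "n = 0")
  case True
  then show ?thesis using A unfolding norm_bound_def by auto
next
  case False
  define B where "B = complex_of_real (inverse r) \<cdot>\<^sub>m A"
  have B: "B \<in> carrier_mat n n" using A unfolding B_def by simp
  have "spectral_radius B \<le> inverse r * spectral_radius A"
    using spectral_radius_smult_mat_le[OF A, of "complex_of_real (inverse r)"] False r
    unfolding B_def by (simp add: norm_inverse)
  also have "\<dots> < 1" using r by (simp add: field_simps)
  finally obtain c where c: "\<And>k. norm_bound (B ^\<^sub>m k) c"
    using spectral_radius_jnf_norm_bound_less_1_upper_triangular[OF B] by auto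
  have "A = complex_of_real r \<cdot>\<^sub>m B" using A r unfolding B_def by (auto intro!: eq_matI)
  then have Ak: "A ^\<^sub>m k = complex_of_real r ^ k \<cdot>\<^sub>m (B ^\<^sub>m k)" for k
    using pow_mat_smult[OF B] by simp
  have "norm_bound (A ^\<^sub>m k) (c * r ^ k)" for k
    using c[of k] r unfolding norm_bound_def Ak by (auto simp: norm_mult norm_power)
  then show ?thesis by blast
qed

lemma pow_mat_real_entries_le_geometric:
  fixes M :: "real mat"
  assumes M: "M \<in> carrier_mat n n" and r: "spectral_radius (map_mat complex_of_real M) < r" "0 < r"
  obtains c where "\<And>k i j. i < n \<Longrightarrow> j < n \<Longrightarrow> (M ^\<^sub>m k) $$ (i, j) \<le> c * r ^ k"
proof -
  obtain c where c: "\<And>k. norm_bound (map_mat complex_of_real M ^\<^sub>m k) (c * r ^ k)"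
    using norm_bound_pow_mat_geometric[of "map_mat complex_of_real M" n] M r by auto
  have "(M ^\<^sub>m k) $$ (i, j) \<le> c * r ^ k" if "i < n" "j < n" for k i j
  proof -
    have "norm (map_mat complex_of_real (M ^\<^sub>m k) $$ (i, j)) \<le> c * r ^ k"
      using c[of k] M that unfolding of_real_hom.mat_hom_pow[OF M] norm_bound_def by auto
    then show ?thesis using M that by auto
  qed
  then show ?thesis using that by blast
qed

lemma pow_mat_nonneg:
  fixes M :: "'a :: linordered_semidom mat"
  assumes M: "M \<in> carrier_mat n n" and nonneg: "\<And>i j. i < n \<Longrightarrow> j < n \<Longrightarrow> 0 \<le> M $$ (i, j)"
    and "i < n" "j < n"
  shows "0 \<le> (M ^\<^sub>m k) $$ (i, j)"
  using assms(3,4)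
proof (induction k arbitrary: j)
  case (Suc k)
  then show ?case
    using M by (auto simp: scalar_prod_def intro!: sum_nonneg mult_nonneg_nonneg nonneg)
qed (use M in auto)

lemma funpow_dist_le_pow_mat:
  fixes N :: "(nat \<Rightarrow> 'a::metric_space) \<Rightarrow> (nat \<Rightarrow> 'a)" and M :: "real mat"
  assumes M: "M \<in> carrier_mat n n" and nonneg: "\<And>i j. i < n \<Longrightarrow> j < n \<Longrightarrow> 0 \<le> M $$ (i, j)"
    and maps: "\<And>x. x \<in> P \<Longrightarrow> N x \<in> P"
    and step: "\<And>x y j. x \<in> P \<Longrightarrow> y \<in> P \<Longrightarrow> j < n \<Longrightarrow>
                 dist (N x j) (N y j) \<le> (\<Sum>i<n. M $$ (j, i) * dist (x i) (y i))"
    and "x \<in> P" "y \<in> P" "j < n"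
  shows "dist ((N ^^ k) x j) ((N ^^ k) y j) \<le> (\<Sum>i<n. (M ^\<^sub>m k) $$ (j, i) * dist (x i) (y i))"
  using assms(5-7)
proof (induction k arbitrary: x y)
  case 0
  have "(\<Sum>i<n. (M ^\<^sub>m 0) $$ (j, i) * dist (x i) (y i)) = (\<Sum>i<n. if i = j then dist (x i) (y i) else 0)"
    using M \<open>j < n\<close> by (intro sum.cong) auto
  then show ?case using \<open>j < n\<close> by simp
next
  case (Suc k)
  let ?d = "\<lambda>i. dist (x i) (y i)"
  have "dist ((N ^^ Suc k) x j) ((N ^^ Suc k) y j) = dist ((N ^^ k) (N x) j) ((N ^^ k) (N y) j)"
    by (simp add: funpow_Suc_right del: funpow.simps)
  also have "\<dots> \<le> (\<Sum>l<n. (M ^\<^sub>m k) $$ (j, l) * dist (N x l) (N y l))"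
    using Suc by (simp add: maps)
  also have "\<dots> \<le> (\<Sum>l<n. (M ^\<^sub>m k) $$ (j, l) * (\<Sum>i<n. M $$ (l, i) * ?d i))"
    using Suc.prems by (intro sum_mono mult_left_mono step pow_mat_nonneg[OF M nonneg]) auto
  also have "\<dots> = (\<Sum>l<n. \<Sum>i<n. (M ^\<^sub>m k) $$ (j, l) * M $$ (l, i) * ?d i)"
    by (simp add: sum_distrib_left mult.assoc)
  also have "\<dots> = (\<Sum>i<n. (\<Sum>l<n. (M ^\<^sub>m k) $$ (j, l) * M $$ (l, i)) * ?d i)"
    by (subst sum.swap) (simp add: sum_distrib_right)
  also have "\<dots> = (\<Sum>i<n. (M ^\<^sub>m Suc k) $$ (j, i) * ?d i)"
    using M Suc.prems by (intro sum.cong) (auto simp: scalar_prod_def lessThan_atLeast0)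
  finally show ?case .
qed

lemma dmax_nonneg: "0 \<le> dmax n x y"
  unfolding dmax_def by (auto intro: Max_ge)

lemma dmax_le_sum: "dmax n x y \<le> (\<Sum>i<n. dist (x i) (y i))"
  unfolding dmax_def by (auto intro: member_le_sum sum_nonneg)

lemma tendsto_dmax_zero:
  assumes "\<And>j. j < n \<Longrightarrow> (\<lambda>k. dist (f k j) (g j)) \<longlonglongrightarrow> 0"
  shows "(\<lambda>k. dmax n (f k) g) \<longlonglongrightarrow> 0"
proof (rule tendsto_sandwich[of "\<lambda>_. 0" _ _ "\<lambda>k. \<Sum>j<n. dist (f k j) (g j)"])
  show "(\<lambda>k. \<Sum>j<n. dist (f k j) (g j)) \<longlonglongrightarrow> 0"
    using assms by (intro tendsto_null_sum) auto
qed (simp_all add: dmax_nonneg dmax_le_sum)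

lemma funpow_closed:
  assumes "x \<in> S" and closed: "\<And>x. x \<in> S \<Longrightarrow> f x \<in> S"
  shows "(f ^^ k) x \<in> S"
  using assms(1) by (induction k) (simp_all add: closed)

lemma synchronizing_orbit_converges:
  fixes N :: "(nat \<Rightarrow> 'a::metric_space) \<Rightarrow> (nat \<Rightarrow> 'a)"
  assumes complete: "complete (X j)" and j: "j < n"
    and maps: "\<And>x. x \<in> PiE {..<n} X \<Longrightarrow> N x \<in> PiE {..<n} X"
    and decay: "\<And>x y k. x \<in> PiE {..<n} X \<Longrightarrow> y \<in> PiE {..<n} X \<Longrightarrow>
                  dist ((N ^^ k) x j) ((N ^^ k) y j) \<le> K * r ^ k"
    and r: "0 \<le> r" "r < 1"
    and x: "x \<in> PiE {..<n} X"
  shows "\<exists>l. l \<in> X j \<and> (\<lambda>k. (N ^^ k) x j) \<longlonglongrightarrow> l"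
proof -
  have orbit: "(N ^^ k) x \<in> PiE {..<n} X" for k
    using x maps by (rule funpow_closed)
  have "Cauchy (\<lambda>k. (N ^^ k) x j)"
  proof (rule metric_CauchyI)
    fix e :: real assume "e > 0"
    moreover have "(\<lambda>k. K * r ^ k) \<longlonglongrightarrow> 0"
      using r by (intro tendsto_mult_right_zero LIMSEQ_power_zero) auto
    ultimately obtain m where m: "K * r ^ m < e"
      using order_tendstoD(2) by (fastforce simp: eventually_sequentially)
    have "dist ((N ^^ p) x j) ((N ^^ q) x j) < e" if "m \<le> p" "m \<le> q" for p q
    proof -
      have "(N ^^ p) x = (N ^^ m) ((N ^^ (p - m)) x)" "(N ^^ q) x = (N ^^ m) ((N ^^ (q - m)) x)"
        using that funpow_add[of m "p - m" N] funpow_add[of m "q - m" N] by simp_all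
      then show ?thesis
        using decay[OF orbit[of "p - m"] orbit[of "q - m"], of m] m by simp
    qed
    then show "\<exists>m. \<forall>p\<ge>m. \<forall>q\<ge>m. dist ((N ^^ p) x j) ((N ^^ q) x j) < e" by blast
  qed
  moreover have "(N ^^ k) x j \<in> X j" for k
    using orbit j by auto
  ultimately show ?thesis
    using complete[unfolded complete_def, rule_format, of "\<lambda>k. (N ^^ k) x j"] by blast
qed

lemma synchronizing_orbits_imp_global_attractor:
  fixes N :: "(nat \<Rightarrow> 'a::metric_space) \<Rightarrow> (nat \<Rightarrow> 'a)"
  assumes complete: "\<And>j. j < n \<Longrightarrow> complete (X j)"
    and nonempty: "PiE {..<n} X \<noteq> {}"
    and maps: "\<And>x. x \<in> PiE {..<n} X \<Longrightarrow> N x \<in> PiE {..<n} X"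
    and decay: "\<And>x y j k. x \<in> PiE {..<n} X \<Longrightarrow> y \<in> PiE {..<n} X \<Longrightarrow> j < n \<Longrightarrow>
                  dist ((N ^^ k) x j) ((N ^^ k) y j) \<le> K * r ^ k"
    and r: "0 \<le> r" "r < 1"
  shows "\<exists>xt \<in> PiE {..<n} X. \<forall>y \<in> PiE {..<n} X. (\<lambda>k. dmax n ((N ^^ k) y) xt) \<longlonglongrightarrow> 0"
proof -
  obtain x0 where x0: "x0 \<in> PiE {..<n} X" using nonempty by blast
  have "\<forall>j\<in>{..<n}. \<exists>l. l \<in> X j \<and> (\<lambda>k. (N ^^ k) x0 j) \<longlonglongrightarrow> l"
    using synchronizing_orbit_converges[OF complete _ maps decay r x0] by blast
  then obtain xt where xt: "\<forall>j\<in>{..<n}. xt j \<in> X j \<and> (\<lambda>k. (N ^^ k) x0 j) \<longlonglongrightarrow> xt j"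
    by (elim bchoice[THEN exE])
  have "(\<lambda>k. dmax n ((N ^^ k) y) (restrict xt {..<n})) \<longlonglongrightarrow> 0" if y: "y \<in> PiE {..<n} X" for y
  proof (rule tendsto_dmax_zero)
    fix j assume j: "j < n"
    let ?u = "\<lambda>k. K * r ^ k + dist ((N ^^ k) x0 j) (xt j)"
    have bound: "dist ((N ^^ k) y j) (xt j) \<le> ?u k" for k
      using dist_triangle[of "(N ^^ k) y j" "xt j" "(N ^^ k) x0 j"] decay[OF y x0 j, of k] by linarith
    have "(\<lambda>k. dist ((N ^^ k) x0 j) (xt j)) \<longlonglongrightarrow> 0"
      using xt j by (simp flip: tendsto_dist_iff)
    then have "?u \<longlonglongrightarrow> 0"
      using r by (intro tendsto_add_zero tendsto_mult_right_zero LIMSEQ_power_zero) auto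
    then have "(\<lambda>k. dist ((N ^^ k) y j) (xt j)) \<longlonglongrightarrow> 0"
      by (rule Lim_null_comparison[rotated]) (intro always_eventually allI, simp add: bound)
    then show "(\<lambda>k. dist ((N ^^ k) y j) (restrict xt {..<n} j)) \<longlonglongrightarrow> 0"
      using j by simp
  qed
  moreover have "restrict xt {..<n} \<in> PiE {..<n} X"
    using xt by (simp add: restrict_PiE_iff)
  ultimately show ?thesis by blast
qed

lemma interactionD:
  assumes "interaction n X F I Lam" and "j < n"
  shows interaction_subset: "I j \<subseteq> {..<n}"
    and interaction_maps: "\<And>x. x \<in> PiE {..<n} X \<Longrightarrow> F j x \<in> X j"
    and interaction_dist_le_sum: "\<And>x y. x \<in> PiE {..<n} X \<Longrightarrow> y \<in> PiE {..<n} X \<Longrightarrow>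
           dist (F j x) (F j y) \<le> (\<Sum>i\<in>I j. Lam i j * dist (x i) (y i))"
    and interaction_nonneg: "\<And>i. i < n \<Longrightarrow> 0 \<le> Lam i j"
    and interaction_zero: "\<And>i. i < n \<Longrightarrow> i \<notin> I j \<Longrightarrow> Lam i j = 0"
  using assms(1)[unfolded interaction_def, rule_format, OF assms(2)] by (elim conjE; blast)+

lemma interaction_dist_le:
  assumes F: "interaction n X F I Lam" and j: "j < n"
    and x: "x \<in> PiE {..<n} X" and y: "y \<in> PiE {..<n} X"
  shows "dist (F j x) (F j y) \<le> (\<Sum>i<n. Lam i j * dist (x i) (y i))"
proof -
  have "dist (F j x) (F j y) \<le> (\<Sum>i\<in>I j. Lam i j * dist (x i) (y i))"
    by (rule interaction_dist_le_sum[OF F j x y])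
  also have "\<dots> = (\<Sum>i<n. Lam i j * dist (x i) (y i))"
    using interaction_subset[OF F j] interaction_zero[OF F j] by (intro sum.mono_neutral_left) auto
  finally show ?thesis .
qed

lemma prod_map_in_PiE:
  assumes "\<And>i. i < n \<Longrightarrow> T i ` X i \<subseteq> X i" and "x \<in> PiE {..<n} X"
  shows "prod_map n T x \<in> PiE {..<n} X"
  using assms unfolding prod_map_def by auto

lemma network_in_PiE:
  assumes F: "interaction n X F I Lam" and T: "\<And>i. i < n \<Longrightarrow> T i ` X i \<subseteq> X i"
    and x: "x \<in> PiE {..<n} X"
  shows "network n F T x \<in> PiE {..<n} X"
  using interaction_maps[OF F _ prod_map_in_PiE[OF T x]] unfolding network_def by auto

lemma network_dist_le:
  assumes F: "interaction n X F I Lam"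
    and T: "\<And>i. i < n \<Longrightarrow> T i ` X i \<subseteq> X i"
    and T_lip: "\<And>i. i < n \<Longrightarrow>
          bdd_above {dist (T i x) (T i y) / dist x y | x y. x \<in> X i \<and> y \<in> X i \<and> x \<noteq> y}"
    and x: "x \<in> PiE {..<n} X" and y: "y \<in> PiE {..<n} X" and j: "j < n"
  shows "dist (network n F T x j) (network n F T y j)
           \<le> (\<Sum>i<n. Lam i j * lip_const (X i) (T i) * dist (x i) (y i))"
proof -
  have "dist (network n F T x j) (network n F T y j)
               \<le> (\<Sum>i<n. Lam i j * dist (T i (x i)) (T i (y i)))"
    using interaction_dist_le[OF F j prod_map_in_PiE[OF T x] prod_map_in_PiE[OF T y]] j
    unfolding network_def prod_map_def by simp
  also have "\<dots> \<le> (\<Sum>i<n. Lam i j * (lip_const (X i) (T i) * dist (x i) (y i)))"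
    using x y by (intro sum_mono mult_left_mono dist_le_lip_const T_lip interaction_nonneg[OF F j]) auto
  finally show ?thesis by (simp add: mult.assoc)
qed

definition network_real_matrix :: "nat \<Rightarrow> (nat \<Rightarrow> nat \<Rightarrow> real) \<Rightarrow> (nat \<Rightarrow> real) \<Rightarrow> real mat" where
  "network_real_matrix n Lam L = mat n n (\<lambda>(j, i). Lam i j * L i)"

lemma network_matrix_eq: "network_matrix n Lam L = map_mat complex_of_real (network_real_matrix n Lam L)"
  unfolding network_matrix_def network_real_matrix_def by (rule eq_matI) auto

lemma network_real_matrix_nonneg:
  assumes F: "interaction n X F I Lam"
    and T_lip: "\<And>i. i < n \<Longrightarrow>
          bdd_above {dist (T i x) (T i y) / dist x y | x y. x \<in> X i \<and> y \<in> X i \<and> x \<noteq> y}"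
    and "j < n" "i < n"
  shows "0 \<le> network_real_matrix n Lam (\<lambda>i. lip_const (X i) (T i)) $$ (j, i)"
  using assms interaction_nonneg[OF F] lip_const_nonneg[OF T_lip]
  unfolding network_real_matrix_def by simp

lemma funpow_network_dist_le:
  assumes F: "interaction n X F I Lam"
    and T: "\<And>i. i < n \<Longrightarrow> T i ` X i \<subseteq> X i"
    and T_lip: "\<And>i. i < n \<Longrightarrow>
          bdd_above {dist (T i x) (T i y) / dist x y | x y. x \<in> X i \<and> y \<in> X i \<and> x \<noteq> y}"
    and x: "x \<in> PiE {..<n} X" and y: "y \<in> PiE {..<n} X" and j: "j < n"
  shows "dist ((network n F T ^^ k) x j) ((network n F T ^^ k) y j)
           \<le> (\<Sum>i<n. (network_real_matrix n Lam (\<lambda>i. lip_const (X i) (T i)) ^\<^sub>m k) $$ (j, i)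
                     * dist (x i) (y i))"
proof (rule funpow_dist_le_pow_mat[OF _ network_real_matrix_nonneg[OF F T_lip]
      network_in_PiE[OF F T] _ x y j])
  show "network_real_matrix n Lam (\<lambda>i. lip_const (X i) (T i)) \<in> carrier_mat n n"
    unfolding network_real_matrix_def by simp
  fix u v l assume "u \<in> PiE {..<n} X" "v \<in> PiE {..<n} X" "l < n"
  moreover have "(\<Sum>i<n. network_real_matrix n Lam (\<lambda>i. lip_const (X i) (T i)) $$ (l, i) * dist (u i) (v i))
      = (\<Sum>i<n. Lam i l * lip_const (X i) (T i) * dist (u i) (v i))"
    using \<open>l < n\<close> unfolding network_real_matrix_def by (intro sum.cong) auto
  ultimately show "dist (network n F T u l) (network n F T v l)
      \<le> (\<Sum>i<n. network_real_matrix n Lam (\<lambda>i. lip_const (X i) (T i)) $$ (l, i) * dist (u i) (v i))"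
    using network_dist_le[OF F T T_lip] by simp
qed

theorem theorem7:
  fixes n :: nat
    and X :: "nat \<Rightarrow> 'a::metric_space set"
    and T :: "nat \<Rightarrow> 'a \<Rightarrow> 'a"
    and F :: "nat \<Rightarrow> (nat \<Rightarrow> 'a) \<Rightarrow> 'a"
    and I :: "nat \<Rightarrow> nat set"
    and Lam :: "nat \<Rightarrow> nat \<Rightarrow> real"
  assumes compact: "\<And>i. i < n \<Longrightarrow> compact (X i)"
    and nonempty: "\<And>i. i < n \<Longrightarrow> X i \<noteq> {}"
    and T_maps: "\<And>i. i < n \<Longrightarrow> T i ` X i \<subseteq> X i"
    and T_lip_finite: "\<And>i. i < n \<Longrightarrow>
          bdd_above {dist (T i x) (T i y) / dist x y | x y. x \<in> X i \<and> y \<in> X i \<and> x \<noteq> y}"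
    and F_int: "interaction n X F I Lam"
    and rho: "spectral_radius (network_matrix n Lam (\<lambda>i. lip_const (X i) (T i))) < 1"
  shows "\<exists>xt \<in> PiE {..<n} X. \<forall>y \<in> PiE {..<n} X.
           (\<lambda>k. dmax n ((network n F T ^^ k) y) xt) \<longlonglongrightarrow> 0"
proof -
  define M where "M = network_real_matrix n Lam (\<lambda>i. lip_const (X i) (T i))"
  have M: "M \<in> carrier_mat n n" unfolding M_def network_real_matrix_def by simp
  define r where "r = (max (spectral_radius (map_mat complex_of_real M)) 0 + 1) / 2"
  have r: "spectral_radius (map_mat complex_of_real M) < r" "0 < r" "r < 1"
    using rho unfolding r_def M_def network_matrix_eq by auto
  obtain c where c: "\<And>k i j. i < n \<Longrightarrow> j < n \<Longrightarrow> (M ^\<^sub>m k) $$ (i, j) \<le> c * r ^ k"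
    using pow_mat_real_entries_le_geometric[OF M r(1,2)] by blast
  have "dist ((network n F T ^^ k) x j) ((network n F T ^^ k) y j) \<le> (c * (\<Sum>i<n. diameter (X i))) * r ^ k"
    if x: "x \<in> PiE {..<n} X" and y: "y \<in> PiE {..<n} X" and j: "j < n" for x y j k
  proof -
    have "dist ((network n F T ^^ k) x j) ((network n F T ^^ k) y j)
            \<le> (\<Sum>i<n. (M ^\<^sub>m k) $$ (j, i) * dist (x i) (y i))"
      unfolding M_def by (rule funpow_network_dist_le[OF F_int T_maps T_lip_finite x y j])
    also have "\<dots> \<le> (\<Sum>i<n. c * r ^ k * diameter (X i))"
      using x y j by (intro sum_mono mult_mono' c diameter_bounded_bound compact_imp_bounded compact
          pow_mat_nonneg[OF M] network_real_matrix_nonneg[OF F_int T_lip_finite, folded M_def]) auto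
    finally show ?thesis by (simp add: sum_distrib_left mult_ac)
  qed
  then show ?thesis
    using nonempty compact r
    by (intro synchronizing_orbits_imp_global_attractor network_in_PiE[OF F_int T_maps]
        compact_imp_complete) (auto simp: PiE_eq_empty_iff)
qed

end
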